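(* For every integer $n\ge 3$, the square of the path $P_n^2$ admits a signed product cordial labeling.
   Context: A graph $G$ is signed product cordial if there is a vertex labeling $\alpha: V(G)\to\{1,-1\}$ such that, with the induced edge labeling $\alpha^*(uv)=\alpha(u)\alpha(v)$, we have $|v_\alpha(-1)-v_\alpha(1)|\le 1$ and $|e_{\alpha^*}(-1)-e_{\alpha^*}(1)|\le 1$. Here $v_\alpha(x)$ is the number of vertices labeled $x$ and $e_{\alpha^*}(x)$ is the number of edges labeled $x$; such an $\alpha$ is called a signed product cordial labeling. The square of the path $P_n^2$ is the graph obtained from the path $P_n=v_1v_2\cdots v_n$ by additionally joining every two vertices at distance $2$ in $P_n$. Thus its edges are $v_iv_{i+1}$ for $1\le i\le n-1$ and $v_iv_{i+2}$ for $1\le i\le n-2$. *)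

theory Defs
  imports Main
begin

definition vcount :: "'a set \<Rightarrow> ('a \<Rightarrow> int) \<Rightarrow> int \<Rightarrow> nat" where
  "vcount V \<alpha> x = card {v \<in> V. \<alpha> v = x}"

definition ecount :: "'a set set \<Rightarrow> ('a \<Rightarrow> int) \<Rightarrow> int \<Rightarrow> nat" where
  "ecount E \<alpha> x = card {e \<in> E. (\<exists>u v. e = {u, v} \<and> u \<noteq> v \<and> \<alpha> u * \<alpha> v = x)}"

definition signed_product_cordial_labeling ::
  "'a set \<Rightarrow> 'a set set \<Rightarrow> ('a \<Rightarrow> int) \<Rightarrow> bool" where
  "signed_product_cordial_labeling V E \<alpha> \<longleftrightarrow>
     (\<forall>v\<in>V. \<alpha> v \<in> {1, -1}) \<and>
     \<bar>int (vcount V \<alpha> (-1)) - int (vcount V \<alpha> 1)\<bar> \<le> 1 \<and>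
     \<bar>int (ecount E \<alpha> (-1)) - int (ecount E \<alpha> 1)\<bar> \<le> 1"

definition signed_product_cordial :: "'a set \<Rightarrow> 'a set set \<Rightarrow> bool" where
  "signed_product_cordial V E \<longleftrightarrow> (\<exists>\<alpha>. signed_product_cordial_labeling V E \<alpha>)"

definition path_sq_vertices :: "nat \<Rightarrow> nat set" where
  "path_sq_vertices n = {1..n}"

definition path_sq_edges :: "nat \<Rightarrow> nat set set" where
  "path_sq_edges n = {{i, i + 1} | i. 1 \<le> i \<and> i \<le> n - 1}
                   \<union> {{i, i + 2} | i. 1 \<le> i \<and> i \<le> n - 2}"

end

theory Submission
  imports Defs
begin

text \<open>Label vertex \<open>v\<^sub>i\<close> by \<open>(-1)\<^sup>i\<close>. An edge \<open>v\<^sub>iv\<^sub>i\<^sub>+\<^sub>k\<close> then gets the label \<open>(-1)\<^sup>k\<close>, so the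
  \<open>n - 1\<close> path edges are labelled \<open>-1\<close> and the \<open>n - 2\<close> edges of length two are labelled \<open>1\<close>,
  while the vertex labels split into \<open>\<lceil>n/2\<rceil>\<close> odd and \<open>\<lfloor>n/2\<rfloor>\<close> even positions.\<close>

definition alternating_sign :: "nat \<Rightarrow> int" where
  "alternating_sign i = (-1) ^ i"

lemma alternating_sign_eq_1_iff: "alternating_sign i = 1 \<longleftrightarrow> even i"
  by (simp add: alternating_sign_def minus_one_power_iff)

lemma alternating_sign_eq_neg_1_iff: "alternating_sign i = -1 \<longleftrightarrow> odd i"
  by (simp add: alternating_sign_def minus_one_power_iff)

lemma card_even_atLeastAtMost: "card {v \<in> {1..n::nat}. even v} = n div 2"
proof (induction n)
  case (Suc n)
  have "{v \<in> {1..Suc n}. even v} = {v \<in> {1..n}. even v} \<union> (if even (Suc n) then {Suc n} else {})"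
    by (auto simp: le_Suc_eq)
  with Suc show ?case by auto
qed simp

lemma card_odd_atLeastAtMost: "card {v \<in> {1..n::nat}. odd v} = (n + 1) div 2"
proof (induction n)
  case (Suc n)
  have "{v \<in> {1..Suc n}. odd v} = {v \<in> {1..n}. odd v} \<union> (if odd (Suc n) then {Suc n} else {})"
    by (auto simp: le_Suc_eq)
  with Suc show ?case by auto
qed simp

lemma path_sq_edges_eq:
  "path_sq_edges n = (\<lambda>i. {i, i + 1}) ` {1..n - 1} \<union> (\<lambda>i. {i, i + 2}) ` {1..n - 2}"
  unfolding path_sq_edges_def by auto

lemma card_image_doubleton_shift:
  assumes "k > 0" "finite I"
  shows "card ((\<lambda>i::nat. {i, i + k}) ` I) = card I"
proof (rule card_image)
  show "inj_on (\<lambda>i. {i, i + k}) I"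
    using assms(1) by (auto simp: inj_on_def doubleton_eq_iff)
qed

lemma alternating_sign_edge_label:
  assumes "k > 0"
  shows "(\<exists>u v. {i, i + k} = {u, v} \<and> u \<noteq> v \<and> alternating_sign u * alternating_sign v = x)
    \<longleftrightarrow> x = (-1) ^ k"
proof -
  have label: "alternating_sign i * alternating_sign (i + k) = (-1) ^ k"
    by (simp add: alternating_sign_def minus_one_power_iff)
  have "i \<noteq> i + k"
    using assms by simp
  with label show ?thesis
    by (metis doubleton_eq_iff mult.commute)
qed

lemma alternating_sign_edges_with_label:
  assumes "k > 0"
  shows "{e \<in> (\<lambda>i. {i, i + k}) ` I. \<exists>u v. e = {u, v} \<and> u \<noteq> v \<and> alternating_sign u * alternating_sign v = x}
    = (if x = (-1) ^ k then (\<lambda>i. {i, i + k}) ` I else {})"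
  using alternating_sign_edge_label[OF assms] by auto

lemma ecount_path_sq_alternating_sign:
  "ecount (path_sq_edges n) alternating_sign (-1) = n - 1"
  "ecount (path_sq_edges n) alternating_sign 1 = n - 2"
proof -
  have filter_Un: "{e \<in> A \<union> B. P e} = {e \<in> A. P e} \<union> {e \<in> B. P e}" for A B and P :: "nat set \<Rightarrow> bool"
    by blast
  show "ecount (path_sq_edges n) alternating_sign (-1) = n - 1"
       "ecount (path_sq_edges n) alternating_sign 1 = n - 2"
    unfolding ecount_def path_sq_edges_eq filter_Un
    by (simp_all add: alternating_sign_edges_with_label[of 1, simplified]
        alternating_sign_edges_with_label[of 2, simplified]
        card_image_doubleton_shift[of 1, simplified] card_image_doubleton_shift[of 2, simplified])
qed

lemma vcount_path_sq_alternating_sign: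
  "vcount (path_sq_vertices n) alternating_sign (-1) = (n + 1) div 2"
  "vcount (path_sq_vertices n) alternating_sign 1 = n div 2"
  unfolding vcount_def path_sq_vertices_def alternating_sign_eq_1_iff alternating_sign_eq_neg_1_iff
  by (simp_all only: card_odd_atLeastAtMost card_even_atLeastAtMost)

theorem theorem2p3:
  fixes n :: nat
  assumes "n \<ge> 3"
  shows "signed_product_cordial (path_sq_vertices n) (path_sq_edges n)"
proof -
  \<comment> \<open>The alternating labeling works for every \<open>n\<close>.\<close>
  have "signed_product_cordial_labeling (path_sq_vertices n) (path_sq_edges n) alternating_sign"
    unfolding signed_product_cordial_labeling_def
      ecount_path_sq_alternating_sign vcount_path_sq_alternating_sign
    by (auto simp: alternating_sign_def minus_one_power_iff)
  then show ?thesis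
    unfolding signed_product_cordial_def by blast
qed

end
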